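(* Let $G$ be a directed $st$-graph and $G'$ a subgraph of $G$ with the same source and sink such that $\mathrm{Path}_A(G')=\mathrm{Path}_A(G)$. Then $G$ is vulnerable if and only if $G'$ is vulnerable.
   Context: A directed $st$-graph $G=(V,E,s,t)$ is a finite directed graph with no self-loops and no parallel edges, with distinct source $s$ (no incoming edges) and sink $t$ (no outgoing edges), such that every vertex lies on some directed walk from $s$ to $t$. $\mathrm{Path}_A(G)$ is the set of acyclic directed $s$–$t$ paths in $G$; $P(G)$ is the set of all directed $s$–$t$ walks. A flow is a finitely supported $\varphi:P(G)\to\mathbb{R}_{\ge0}$, inducing $\varphi(e)=\sum_p(\text{occurrences of }e\text{ in }p)\varphi(p)$. A latency function assigns each edge a continuous non-decreasing $l_e:\mathbb{R}_{\ge0}\to\mathbb{R}_{\ge0}$, and $l_p(\varphi)=\sum_{e\in p}l_e(\varphi(e))$. A flow is feasible for $(G,r,l)$ if its total value is $r$, and a Wardrop flow if for all $p,q$ with $\varphi(p)>0$, $l_p(\varphi)\le l_q(\varphi)$; $L(G,r,l)$ is the common latency of used paths at any Wardrop flow ($0$ if $r=0$). $G$ is vulnerable if there exist $r\ge0$, a latency function $l$ and a subgraph $H$ of $G$ (same source and sink) with $L(G,r,l)>L(H,r,l|_H)$. *)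

theory Defs
  imports "HOL-Analysis.Analysis"
begin

text \<open>Directed st-graphs. Edges are pairs of vertices, so there are no parallel edges.\<close>
record 'v stgraph =
  verts :: "'v set"
  arcs  :: "('v \<times> 'v) set"
  src   :: 'v
  snk   :: 'v

text \<open>A walk is represented by its vertex sequence; its edge sequence (with multiplicity):\<close>
definition walk_edges :: "'v list \<Rightarrow> ('v \<times> 'v) list" where
  "walk_edges p = zip p (tl p)"

definition st_walks :: "('v, 'b) stgraph_scheme \<Rightarrow> 'v list set" where
  "st_walks G = {p. p \<noteq> [] \<and> hd p = src G \<and> last p = snk G \<and>
                    set p \<subseteq> verts G \<and> set (walk_edges p) \<subseteq> arcs G}"

definition acyclic_paths :: "('v, 'b) stgraph_scheme \<Rightarrow> 'v list set" where
  "acyclic_paths G = {p \<in> st_walks G. distinct p}"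

definition st_graph :: "('v, 'b) stgraph_scheme \<Rightarrow> bool" where
  "st_graph G \<longleftrightarrow>
     finite (verts G) \<and> arcs G \<subseteq> verts G \<times> verts G \<and>
     (\<forall>v. (v, v) \<notin> arcs G) \<and>
     src G \<in> verts G \<and> snk G \<in> verts G \<and> src G \<noteq> snk G \<and>
     (\<forall>v. (v, src G) \<notin> arcs G) \<and> (\<forall>v. (snk G, v) \<notin> arcs G) \<and>
     (\<forall>v \<in> verts G. \<exists>p \<in> st_walks G. v \<in> set p)"

definition subgraph :: "('v, 'b) stgraph_scheme \<Rightarrow> ('v, 'b) stgraph_scheme \<Rightarrow> bool" where
  "subgraph H G \<longleftrightarrow> verts H \<subseteq> verts G \<and> arcs H \<subseteq> arcs G \<and>
                      src H = src G \<and> snk H = snk G"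

definition is_flow :: "('v, 'b) stgraph_scheme \<Rightarrow> ('v list \<Rightarrow> real) \<Rightarrow> bool" where
  "is_flow G \<phi> \<longleftrightarrow> (\<forall>p. \<phi> p \<ge> 0) \<and> finite {p. \<phi> p \<noteq> 0} \<and> {p. \<phi> p \<noteq> 0} \<subseteq> st_walks G"

definition edge_flow :: "('v list \<Rightarrow> real) \<Rightarrow> ('v \<times> 'v) \<Rightarrow> real" where
  "edge_flow \<phi> e = (\<Sum>p\<in>{p. \<phi> p \<noteq> 0}. real (count_list (walk_edges p) e) * \<phi> p)"

definition latency_fn :: "('v, 'b) stgraph_scheme \<Rightarrow> ('v \<times> 'v \<Rightarrow> real \<Rightarrow> real) \<Rightarrow> bool" where
  "latency_fn G l \<longleftrightarrow> (\<forall>e \<in> arcs G. continuous_on {0..} (l e) \<and> mono_on {0..} (l e) \<and>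
                                      (\<forall>x\<ge>0. l e x \<ge> 0))"

definition path_latency :: "('v \<times> 'v \<Rightarrow> real \<Rightarrow> real) \<Rightarrow> ('v list \<Rightarrow> real) \<Rightarrow> 'v list \<Rightarrow> real" where
  "path_latency l \<phi> p = sum_list (map (\<lambda>e. l e (edge_flow \<phi> e)) (walk_edges p))"

definition feasible :: "('v, 'b) stgraph_scheme \<Rightarrow> real \<Rightarrow> ('v list \<Rightarrow> real) \<Rightarrow> bool" where
  "feasible G r \<phi> \<longleftrightarrow> is_flow G \<phi> \<and> (\<Sum>p\<in>{p. \<phi> p \<noteq> 0}. \<phi> p) = r"

definition wardrop :: "('v, 'b) stgraph_scheme \<Rightarrow> real \<Rightarrow> ('v \<times> 'v \<Rightarrow> real \<Rightarrow> real) \<Rightarrow> ('v list \<Rightarrow> real) \<Rightarrow> bool" where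
  "wardrop G r l \<phi> \<longleftrightarrow> feasible G r \<phi> \<and>
     (\<forall>p \<in> st_walks G. \<forall>q \<in> st_walks G. \<phi> p > 0 \<longrightarrow> path_latency l \<phi> p \<le> path_latency l \<phi> q)"

definition eq_latency :: "('v, 'b) stgraph_scheme \<Rightarrow> real \<Rightarrow> ('v \<times> 'v \<Rightarrow> real \<Rightarrow> real) \<Rightarrow> real" where
  "eq_latency G r l = (if r = 0 then 0 else
     (SOME c. \<exists>\<phi>. wardrop G r l \<phi> \<and> (\<forall>p. \<phi> p > 0 \<longrightarrow> path_latency l \<phi> p = c)))"

definition vulnerable :: "('v, 'b) stgraph_scheme \<Rightarrow> bool" where
  "vulnerable G \<longleftrightarrow> (\<exists>r\<ge>0. \<exists>l. latency_fn G l \<and>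
      (\<exists>H. st_graph H \<and> subgraph H G \<and> eq_latency G r l > eq_latency H r l))"

end

theory Submission
  imports Defs
begin

text \<open>
  Since latencies are nonnegative, a walk with a cycle costs at least as much as its shortcut. At a
  Wardrop flow a used walk costs at most its shortcut, so every edge of its cycle has latency 0;
  moving the walk's flow onto
  the shortcut keeps these latencies at 0 (they are monotone and nonnegative) and changes no other
  load. Hence every equilibrium level is attained by a Wardrop flow on acyclic paths, and such a
  flow is Wardrop in \<open>G\<close> iff it is in \<open>G'\<close>, because every walk shortcuts to an acyclic path of no
  larger latency. Thus \<open>L(G) = L(G')\<close>; a witness subgraph \<open>H\<close> of \<open>G\<close> may be replaced by the union
  of its acyclic paths, which lies in \<open>G'\<close>, and latencies on \<open>G'\<close> extend by 0 to \<open>G\<close>.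
\<close>

lemma walk_edges_Nil [simp]: "walk_edges [] = []"
  and walk_edges_singleton [simp]: "walk_edges [a] = []"
  and walk_edges_Cons_Cons [simp]: "walk_edges (a # b # p) = (a, b) # walk_edges (b # p)"
  by (simp_all add: walk_edges_def)

lemma walk_edges_append_Cons: "walk_edges (xs @ v # ys) = walk_edges (xs @ [v]) @ walk_edges (v # ys)"
  by (induction xs rule: induct_list012) auto

lemma walk_edges_cycle:
  "walk_edges (xs @ v # ys @ v # zs) =
     walk_edges (xs @ [v]) @ walk_edges (v # ys @ [v]) @ walk_edges (v # zs)"
  using walk_edges_append_Cons[of xs v "ys @ v # zs"] walk_edges_append_Cons[of "v # ys" v zs] by simp

lemma walk_edges_subset: "set (walk_edges p) \<subseteq> set p \<times> set p"
proof -
  have "set (tl p) \<subseteq> set p" by (cases p) auto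
  then show ?thesis unfolding walk_edges_def by (auto elim: in_set_zipE)
qed

lemma st_walks_shortcut:
  assumes "xs @ v # ys @ v # zs \<in> st_walks A"
  shows "xs @ v # zs \<in> st_walks A"
proof -
  have "set (walk_edges (xs @ v # zs)) \<subseteq> set (walk_edges (xs @ v # ys @ v # zs))"
    unfolding walk_edges_cycle walk_edges_append_Cons[of xs v zs] by auto
  moreover have "hd (xs @ v # zs) = hd (xs @ v # ys @ v # zs)" by (cases xs) auto
  moreover have "last (xs @ v # zs) = last (xs @ v # ys @ v # zs)" by (cases zs) auto
  ultimately show ?thesis using assms unfolding st_walks_def by auto
qed

definition walk_weight :: "('v \<times> 'v \<Rightarrow> real) \<Rightarrow> 'v list \<Rightarrow> real" where
  "walk_weight w p = sum_list (map w (walk_edges p))"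

lemma path_latency_walk_weight: "path_latency l \<phi> p = walk_weight (\<lambda>e. l e (edge_flow \<phi> e)) p"
  by (simp add: path_latency_def walk_weight_def)

lemma walk_weight_cycle:
  "walk_weight w (xs @ v # ys @ v # zs) = walk_weight w (xs @ v # zs) + walk_weight w (v # ys @ [v])"
  by (simp add: walk_weight_def walk_edges_cycle walk_edges_append_Cons[of xs v zs])

lemma walk_weight_nonneg:
  "(\<And>e. e \<in> set (walk_edges p) \<Longrightarrow> 0 \<le> w e) \<Longrightarrow> 0 \<le> walk_weight w p"
  unfolding walk_weight_def by (rule sum_list_nonneg) auto

lemma walk_weight_cong:
  "(\<And>e. e \<in> set (walk_edges p) \<Longrightarrow> w e = w' e) \<Longrightarrow> walk_weight w p = walk_weight w' p"
  unfolding walk_weight_def by (metis map_cong)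

lemma st_walk_arcs: "p \<in> st_walks A \<Longrightarrow> set (walk_edges p) \<subseteq> arcs A"
  by (simp add: st_walks_def)

lemma acyclic_path_weight_le:
  assumes "p \<in> st_walks A" and "\<And>e. e \<in> arcs A \<Longrightarrow> 0 \<le> w e"
  shows "\<exists>q\<in>acyclic_paths A. walk_weight w q \<le> walk_weight w p"
  using assms(1)
proof (induction "length p" arbitrary: p rule: less_induct)
  case less
  show ?case
  proof (cases "distinct p")
    case True
    with less.prems show ?thesis unfolding acyclic_paths_def by auto
  next
    case False
    then obtain xs v ys zs where p: "p = xs @ v # ys @ v # zs"
      using not_distinct_decomp[OF False] by auto
    have "xs @ v # zs \<in> st_walks A" using less.prems unfolding p by (rule st_walks_shortcut)
    with less.hyps[of "xs @ v # zs"] obtain q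
      where "q \<in> acyclic_paths A" "walk_weight w q \<le> walk_weight w (xs @ v # zs)"
      by (auto simp: p)
    moreover have "0 \<le> walk_weight w (v # ys @ [v])"
      using st_walk_arcs[OF less.prems] assms(2) by (intro walk_weight_nonneg) (auto simp: p walk_edges_cycle)
    ultimately show ?thesis unfolding p walk_weight_cycle by force
  qed
qed

lemma acyclic_paths_nonempty: "p \<in> st_walks A \<Longrightarrow> \<exists>q. q \<in> acyclic_paths A"
  using acyclic_path_weight_le[where w = "\<lambda>_. 0"] by blast

subsection \<open>Rerouting flow\<close>

definition reroute :: "('v list \<Rightarrow> real) \<Rightarrow> 'v list \<Rightarrow> 'v list \<Rightarrow> 'v list \<Rightarrow> real" where
  "reroute \<phi> p p' = \<phi>(p := 0, p' := \<phi> p' + \<phi> p)"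

lemma support_reroute:
  "p \<noteq> p' \<Longrightarrow> {q. reroute \<phi> p p' q \<noteq> 0} \<subseteq> insert p' {q. \<phi> q \<noteq> 0} - {p}"
  by (auto simp: reroute_def)

lemma sum_support_reroute:
  fixes f :: "'v list \<Rightarrow> real"
  assumes fin: "finite {q. \<phi> q \<noteq> 0}" and "p \<noteq> p'"
  shows "(\<Sum>q\<in>{q. reroute \<phi> p p' q \<noteq> 0}. f q * reroute \<phi> p p' q) =
         (\<Sum>q\<in>{q. \<phi> q \<noteq> 0}. f q * \<phi> q) - f p * \<phi> p + f p' * \<phi> p"
proof -
  define S where "S = insert p (insert p' {q. \<phi> q \<noteq> 0})"
  have S: "finite S" "p \<in> S" "p' \<in> S" "{q. \<phi> q \<noteq> 0} \<subseteq> S" "{q. reroute \<phi> p p' q \<noteq> 0} \<subseteq> S"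
    using fin support_reroute[OF \<open>p \<noteq> p'\<close>] by (auto simp: S_def)
  have extend: "(\<Sum>q\<in>{q. \<psi> q \<noteq> 0}. f q * \<psi> q) = (\<Sum>q\<in>S. f q * \<psi> q)"
    if "{q. \<psi> q \<noteq> 0} \<subseteq> S" for \<psi> :: "'v list \<Rightarrow> real"
    by (rule sum.mono_neutral_left) (use S that in auto)
  have "(\<Sum>q\<in>S. f q * reroute \<phi> p p' q) =
        (\<Sum>q\<in>S. f q * \<phi> q - (if q = p then f p * \<phi> p else 0) + (if q = p' then f p' * \<phi> p else 0))"
    using \<open>p \<noteq> p'\<close> by (intro sum.cong) (auto simp: reroute_def algebra_simps)
  also have "\<dots> = (\<Sum>q\<in>S. f q * \<phi> q) - f p * \<phi> p + f p' * \<phi> p"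
    using S by (simp add: sum.distrib sum_subtractf)
  finally show ?thesis using extend[OF S(4)] extend[OF S(5)] by simp
qed

lemma edge_flow_reroute_shortcut:
  assumes "finite {q. \<phi> q \<noteq> 0}"
  shows "edge_flow (reroute \<phi> (xs @ v # ys @ v # zs) (xs @ v # zs)) e =
         edge_flow \<phi> e - real (count_list (walk_edges (v # ys @ [v])) e) * \<phi> (xs @ v # ys @ v # zs)"
proof -
  have "xs @ v # ys @ v # zs \<noteq> xs @ v # zs" by simp
  from sum_support_reroute[OF assms this, of "\<lambda>q. real (count_list (walk_edges q) e)"]
  show ?thesis
    unfolding edge_flow_def walk_edges_cycle walk_edges_append_Cons[of xs v zs]
    by (simp add: algebra_simps)
qed

lemma support_length_reroute_less:
  assumes fin: "finite {q. \<phi> q \<noteq> 0}" and "\<phi> p \<noteq> 0" and "length p' < length p"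
  shows "(\<Sum>q\<in>{q. reroute \<phi> p p' q \<noteq> 0}. length q) < (\<Sum>q\<in>{q. \<phi> q \<noteq> 0}. length q)"
proof -
  have "(\<Sum>q\<in>{q. reroute \<phi> p p' q \<noteq> 0}. length q) \<le> (\<Sum>q\<in>insert p' ({q. \<phi> q \<noteq> 0} - {p}). length q)"
    using support_reroute[of p p' \<phi>] assms(3) fin by (intro sum_mono2) auto
  also have "\<dots> \<le> length p' + (\<Sum>q\<in>{q. \<phi> q \<noteq> 0} - {p}. length q)"
    using fin by (simp add: sum.insert_if)
  also have "\<dots> < (\<Sum>q\<in>{q. \<phi> q \<noteq> 0}. length q)"
    using sum.remove[OF fin, of p length] assms(2,3) by simp
  finally show ?thesis .
qed

subsection \<open>Wardrop flows on acyclic paths\<close>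

definition wardrop_at ::
  "('v, 'b) stgraph_scheme \<Rightarrow> real \<Rightarrow> ('v \<times> 'v \<Rightarrow> real \<Rightarrow> real) \<Rightarrow> ('v list \<Rightarrow> real) \<Rightarrow> real \<Rightarrow> bool"
  where "wardrop_at G r l \<phi> c \<longleftrightarrow> wardrop G r l \<phi> \<and> (\<forall>p. 0 < \<phi> p \<longrightarrow> path_latency l \<phi> p = c)"

lemma eq_latency_wardrop_at: "eq_latency G r l = (if r = 0 then 0 else SOME c. \<exists>\<phi>. wardrop_at G r l \<phi> c)"
  by (simp add: eq_latency_def wardrop_at_def)

lemma eq_latency_cong:
  assumes "\<And>c. (\<exists>\<phi>. wardrop_at G r l \<phi> c) \<longleftrightarrow> (\<exists>\<phi>. wardrop_at H r l' \<phi> c)"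
  shows "eq_latency G r l = eq_latency H r l'"
  using assms by (simp add: eq_latency_wardrop_at)

lemma wardrop_flowD:
  assumes "wardrop G r l \<phi>"
  shows "\<And>q. 0 \<le> \<phi> q" and "finite {q. \<phi> q \<noteq> 0}" and "\<And>q. \<phi> q \<noteq> 0 \<Longrightarrow> q \<in> st_walks G"
    and "\<And>q. 0 < \<phi> q \<Longrightarrow> q \<in> st_walks G"
  using assms by (auto simp: wardrop_def feasible_def is_flow_def)

lemma edge_flow_nonneg: "(\<And>q. 0 \<le> \<phi> q) \<Longrightarrow> 0 \<le> edge_flow \<phi> e"
  unfolding edge_flow_def by (auto intro: sum_nonneg)

lemma latency_fn_nonneg:
  "latency_fn A l \<Longrightarrow> (\<And>q. 0 \<le> \<phi> q) \<Longrightarrow> e \<in> arcs A \<Longrightarrow> 0 \<le> l e (edge_flow \<phi> e)"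
  using edge_flow_nonneg unfolding latency_fn_def by blast

lemma wardrop_cycle_latency_zero:
  assumes lat: "latency_fn A l" and W: "wardrop A r l \<phi>"
    and pos: "0 < \<phi> (xs @ v # ys @ v # zs)"
  shows "path_latency l \<phi> (xs @ v # zs) = path_latency l \<phi> (xs @ v # ys @ v # zs)"
    and "e \<in> set (walk_edges (v # ys @ [v])) \<Longrightarrow> l e (edge_flow \<phi> e) = 0"
proof -
  let ?w = "\<lambda>e. l e (edge_flow \<phi> e)"
  have p: "xs @ v # ys @ v # zs \<in> st_walks A" using wardrop_flowD(4)[OF W pos] .
  have nonneg: "0 \<le> ?w e'" if "e' \<in> set (walk_edges (v # ys @ [v]))" for e'
  proof (rule latency_fn_nonneg[OF lat wardrop_flowD(1)[OF W]])
    show "e' \<in> arcs A" using st_walk_arcs[OF p] that by (auto simp: walk_edges_cycle)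
  qed
  have "walk_weight ?w (xs @ v # ys @ v # zs) \<le> walk_weight ?w (xs @ v # zs)"
    using W pos p st_walks_shortcut[OF p] by (simp add: wardrop_def path_latency_walk_weight)
  then have cycle: "walk_weight ?w (v # ys @ [v]) = 0"
    using walk_weight_nonneg[of "v # ys @ [v]" ?w] nonneg by (simp add: walk_weight_cycle)
  then show "path_latency l \<phi> (xs @ v # zs) = path_latency l \<phi> (xs @ v # ys @ v # zs)"
    by (simp add: path_latency_walk_weight walk_weight_cycle)
  show "l e (edge_flow \<phi> e) = 0" if "e \<in> set (walk_edges (v # ys @ [v]))"
    using cycle that nonneg unfolding walk_weight_def by (subst (asm) sum_list_nonneg_eq_0_iff) auto
qed

text \<open>Edges on the cycle lose load but already have latency 0, the minimum of a latency function.\<close>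

lemma latency_reroute_shortcut:
  assumes lat: "latency_fn A l" and W: "wardrop A r l \<phi>"
    and pos: "0 < \<phi> (xs @ v # ys @ v # zs)"
  shows "l e (edge_flow (reroute \<phi> (xs @ v # ys @ v # zs) (xs @ v # zs)) e) = l e (edge_flow \<phi> e)"
proof (cases "e \<in> set (walk_edges (v # ys @ [v]))")
  case False
  then show ?thesis
    using edge_flow_reroute_shortcut[OF wardrop_flowD(2)[OF W]] by (simp add: count_list_0_iff)
next
  case True
  let ?\<psi> = "reroute \<phi> (xs @ v # ys @ v # zs) (xs @ v # zs)"
  have e: "e \<in> arcs A"
    using True st_walk_arcs[OF wardrop_flowD(4)[OF W pos]] by (auto simp: walk_edges_cycle)
  have "0 \<le> ?\<psi> q" for q using wardrop_flowD(1)[OF W] by (simp add: reroute_def)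
  then have load: "0 \<le> edge_flow ?\<psi> e" and nonneg: "0 \<le> l e (edge_flow ?\<psi> e)"
    using edge_flow_nonneg latency_fn_nonneg[OF lat _ e] by blast+
  have "edge_flow ?\<psi> e \<le> edge_flow \<phi> e"
    using edge_flow_reroute_shortcut[OF wardrop_flowD(2)[OF W]] pos by simp
  moreover have "mono_on {0..} (l e)" using lat e by (simp add: latency_fn_def)
  ultimately have "l e (edge_flow ?\<psi> e) \<le> l e (edge_flow \<phi> e)"
    using load by (auto elim: mono_onD)
  then show ?thesis
    using nonneg wardrop_cycle_latency_zero(2)[OF lat W pos True] by linarith
qed

lemma wardrop_at_reroute_shortcut:
  assumes lat: "latency_fn A l" and W: "wardrop_at A r l \<phi> c"
    and pos: "0 < \<phi> (xs @ v # ys @ v # zs)"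
  shows "wardrop_at A r l (reroute \<phi> (xs @ v # ys @ v # zs) (xs @ v # zs)) c"
proof -
  define p where "p = xs @ v # ys @ v # zs"
  define p' where "p' = xs @ v # zs"
  let ?\<psi> = "reroute \<phi> p p'"
  have W\<phi>: "wardrop A r l \<phi>" and used: "\<And>q. 0 < \<phi> q \<Longrightarrow> path_latency l \<phi> q = c"
    using W by (simp_all add: wardrop_at_def)
  note flow = wardrop_flowD[OF W\<phi>]
  have pp': "p \<noteq> p'" by (simp add: p_def p'_def)
  have pA: "p \<in> st_walks A" using flow(4) pos by (simp add: p_def)
  have p'A: "p' \<in> st_walks A" using st_walks_shortcut pA by (simp add: p_def p'_def)
  have same_latency: "path_latency l ?\<psi> q = path_latency l \<phi> q" for q
    using latency_reroute_shortcut[OF lat W\<phi> pos] by (simp add: path_latency_def p_def p'_def)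
  have c_le: "c \<le> path_latency l \<phi> q" if "q \<in> st_walks A" for q
    using W\<phi> pA pos that used[OF pos] unfolding wardrop_def p_def by force
  have "path_latency l \<phi> p' = c"
    using wardrop_cycle_latency_zero(1)[OF lat W\<phi> pos] used[OF pos] by (simp add: p_def p'_def)
  then have used': "path_latency l \<phi> q = c" if "0 < ?\<psi> q" for q
    using that used pp' by (auto simp: reroute_def split: if_splits)
  have "0 \<le> ?\<psi> q" for q using flow(1) by (simp add: reroute_def)
  moreover have "finite {q. ?\<psi> q \<noteq> 0}"
    using support_reroute[OF pp', of \<phi>] by (rule finite_subset) (simp add: flow(2))
  moreover have "{q. ?\<psi> q \<noteq> 0} \<subseteq> st_walks A"
    using support_reroute[OF pp', of \<phi>] flow(3) p'A by blast
  moreover have "(\<Sum>q\<in>{q. ?\<psi> q \<noteq> 0}. ?\<psi> q) = r"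
    using sum_support_reroute[OF flow(2) pp', of "\<lambda>_. 1"] W\<phi> by (simp add: wardrop_def feasible_def)
  ultimately have "wardrop_at A r l ?\<psi> c"
    using used' c_le unfolding wardrop_at_def wardrop_def feasible_def is_flow_def same_latency
    by simp
  then show ?thesis by (simp add: p_def p'_def)
qed

lemma wardrop_at_acyclic:
  assumes lat: "latency_fn A l" and W: "wardrop_at A r l \<phi> c"
  shows "\<exists>\<psi>. wardrop_at A r l \<psi> c \<and> {q. \<psi> q \<noteq> 0} \<subseteq> acyclic_paths A"
  using W
proof (induction "\<Sum>q\<in>{q. \<phi> q \<noteq> 0}. length q" arbitrary: \<phi> rule: less_induct)
  case less
  note flow = wardrop_flowD[OF less.prems[unfolded wardrop_at_def, THEN conjunct1]]
  show ?case
  proof (cases "\<forall>p. \<phi> p \<noteq> 0 \<longrightarrow> distinct p")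
    case True
    then show ?thesis using less.prems flow(3) by (auto simp: acyclic_paths_def)
  next
    case False
    then obtain p where "\<phi> p \<noteq> 0" "\<not> distinct p" by blast
    then obtain xs v ys zs where nz: "\<phi> (xs @ v # ys @ v # zs) \<noteq> 0"
      using not_distinct_decomp by fastforce
    then have "0 < \<phi> (xs @ v # ys @ v # zs)" using flow(1) by (simp add: less_le)
    then have "wardrop_at A r l (reroute \<phi> (xs @ v # ys @ v # zs) (xs @ v # zs)) c"
      by (rule wardrop_at_reroute_shortcut[OF lat less.prems])
    moreover have "(\<Sum>q\<in>{q. reroute \<phi> (xs @ v # ys @ v # zs) (xs @ v # zs) q \<noteq> 0}. length q)
                    < (\<Sum>q\<in>{q. \<phi> q \<noteq> 0}. length q)"
      using support_length_reroute_less[OF flow(2) nz] by simp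
    ultimately show ?thesis using less.hyps by blast
  qed
qed

lemma wardrop_at_iff_same_acyclic_paths:
  assumes walks: "st_walks B \<subseteq> st_walks A" and acyc: "acyclic_paths A = acyclic_paths B"
    and lat: "latency_fn A l"
  shows "(\<exists>\<phi>. wardrop_at A r l \<phi> c) \<longleftrightarrow> (\<exists>\<phi>. wardrop_at B r l \<phi> c)"
proof
  assume "\<exists>\<phi>. wardrop_at A r l \<phi> c"
  then obtain \<psi> where W: "wardrop_at A r l \<psi> c" and "{q. \<psi> q \<noteq> 0} \<subseteq> acyclic_paths A"
    using wardrop_at_acyclic[OF lat] by blast
  then have "{q. \<psi> q \<noteq> 0} \<subseteq> st_walks B" using acyc by (auto simp: acyclic_paths_def)
  then have "wardrop_at B r l \<psi> c"
    using W walks unfolding wardrop_at_def wardrop_def feasible_def is_flow_def by blast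
  then show "\<exists>\<phi>. wardrop_at B r l \<phi> c" by blast
next
  assume "\<exists>\<phi>. wardrop_at B r l \<phi> c"
  then obtain \<phi> where W: "wardrop_at B r l \<phi> c" ..
  then have WB: "wardrop B r l \<phi>" by (simp add: wardrop_at_def)
  have "path_latency l \<phi> p \<le> path_latency l \<phi> q"
    if q: "q \<in> st_walks A" and p: "0 < \<phi> p" for p q
  proof -
    have "\<And>e. e \<in> arcs A \<Longrightarrow> 0 \<le> l e (edge_flow \<phi> e)"
      by (rule latency_fn_nonneg[OF lat wardrop_flowD(1)[OF WB]])
    from acyclic_path_weight_le[where w = "\<lambda>e. l e (edge_flow \<phi> e)", OF q this] obtain q'
      where "q' \<in> acyclic_paths A" and "path_latency l \<phi> q' \<le> path_latency l \<phi> q"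
      unfolding path_latency_walk_weight by blast
    moreover have "q' \<in> st_walks B"
      using \<open>q' \<in> acyclic_paths A\<close> unfolding acyc by (simp add: acyclic_paths_def)
    moreover have "p \<in> st_walks B" using wardrop_flowD(4)[OF WB p] .
    ultimately show ?thesis using WB p unfolding wardrop_def by force
  qed
  then have "wardrop_at A r l \<phi> c"
    using W walks unfolding wardrop_at_def wardrop_def feasible_def is_flow_def by blast
  then show "\<exists>\<phi>. wardrop_at A r l \<phi> c" by blast
qed

lemma eq_latency_same_acyclic_paths:
  "st_walks B \<subseteq> st_walks A \<Longrightarrow> acyclic_paths A = acyclic_paths B \<Longrightarrow> latency_fn A l \<Longrightarrow>
   eq_latency A r l = eq_latency B r l"
  by (intro eq_latency_cong wardrop_at_iff_same_acyclic_paths)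

lemma eq_latency_cong_arcs:
  assumes "\<And>e. e \<in> arcs H \<Longrightarrow> l e = l' e"
  shows "eq_latency H r l = eq_latency H r l'"
proof (intro eq_latency_cong)
  have "path_latency l \<phi> p = path_latency l' \<phi> p" if "p \<in> st_walks H" for \<phi> p
    unfolding path_latency_walk_weight
    by (rule walk_weight_cong) (use st_walk_arcs[OF that] assms in auto)
  moreover from this have "wardrop H r l \<phi> \<longleftrightarrow> wardrop H r l' \<phi>" for \<phi>
    unfolding wardrop_def by auto
  ultimately have "wardrop_at H r l \<phi> c \<longleftrightarrow> wardrop_at H r l' \<phi> c" for \<phi> c
    unfolding wardrop_at_def by (metis wardrop_flowD(4))
  then show "(\<exists>\<phi>. wardrop_at H r l \<phi> c) \<longleftrightarrow> (\<exists>\<phi>. wardrop_at H r l' \<phi> c)" for c by simp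
qed

lemma subgraph_st_walks: "subgraph B A \<Longrightarrow> st_walks B \<subseteq> st_walks A"
  unfolding subgraph_def st_walks_def by auto

lemma subgraph_acyclic_paths: "subgraph B A \<Longrightarrow> acyclic_paths B \<subseteq> acyclic_paths A"
  using subgraph_st_walks unfolding acyclic_paths_def by blast

lemma subgraph_trans: "subgraph C B \<Longrightarrow> subgraph B A \<Longrightarrow> subgraph C A"
  unfolding subgraph_def by auto

lemma subgraph_latency_fn: "subgraph B A \<Longrightarrow> latency_fn A l \<Longrightarrow> latency_fn B l"
  unfolding subgraph_def latency_fn_def by auto

definition acyclic_part :: "'v stgraph \<Rightarrow> 'v stgraph" where
  "acyclic_part H = \<lparr>verts = (\<Union>p\<in>acyclic_paths H. set p),
                     arcs = (\<Union>p\<in>acyclic_paths H. set (walk_edges p)), src = src H, snk = snk H\<rparr>"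

lemma acyclic_paths_subset_acyclic_part: "acyclic_paths H \<subseteq> st_walks (acyclic_part H)"
  unfolding acyclic_part_def acyclic_paths_def st_walks_def by auto

lemma acyclic_part_subgraph:
  assumes "acyclic_paths H \<subseteq> st_walks G" and "src G = src H" and "snk G = snk H"
  shows "subgraph (acyclic_part H) G"
  using assms unfolding subgraph_def acyclic_part_def st_walks_def by auto

lemma acyclic_part_subgraph_self: "subgraph (acyclic_part H) H"
  by (rule acyclic_part_subgraph) (auto simp: acyclic_paths_def)

lemma acyclic_paths_acyclic_part: "acyclic_paths (acyclic_part H) = acyclic_paths H"
  using subgraph_acyclic_paths[OF acyclic_part_subgraph_self] acyclic_paths_subset_acyclic_part
  by (auto simp: acyclic_paths_def)

lemma st_graph_acyclic_part:
  assumes H: "st_graph H"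
  shows "st_graph (acyclic_part H)"
proof -
  note sub = acyclic_part_subgraph_self[of H]
  obtain p where "p \<in> st_walks H" using H by (auto simp: st_graph_def)
  then obtain q where q: "q \<in> acyclic_paths H" using acyclic_paths_nonempty by blast
  then have "src H \<in> set q" "snk H \<in> set q"
    by (auto simp: acyclic_paths_def st_walks_def intro: hd_in_set last_in_set dest: sym)
  with q have "src H \<in> verts (acyclic_part H)" "snk H \<in> verts (acyclic_part H)"
    by (auto simp: acyclic_part_def)
  moreover have "arcs (acyclic_part H) \<subseteq> verts (acyclic_part H) \<times> verts (acyclic_part H)"
    using walk_edges_subset by (fastforce simp: acyclic_part_def)
  moreover have "\<forall>v\<in>verts (acyclic_part H). \<exists>p\<in>st_walks (acyclic_part H). v \<in> set p"
    using acyclic_paths_subset_acyclic_part by (fastforce simp: acyclic_part_def)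
  moreover have "finite (verts (acyclic_part H))"
    using H sub by (auto simp: st_graph_def subgraph_def intro: finite_subset)
  ultimately show ?thesis
    using H sub unfolding st_graph_def subgraph_def by (auto simp: acyclic_part_def)
qed

theorem lemma5:
  fixes G G' :: "'v stgraph"
  assumes "st_graph G" and "st_graph G'" and "subgraph G' G"
    and "acyclic_paths G' = acyclic_paths G"
  shows "vulnerable G \<longleftrightarrow> vulnerable G'"
proof
  assume "vulnerable G"
  then obtain r l H where r: "r \<ge> 0" and lat: "latency_fn G l" and H: "st_graph H" "subgraph H G"
    and gt: "eq_latency G r l > eq_latency H r l" unfolding vulnerable_def by blast
  have "eq_latency G r l = eq_latency G' r l"
    using assms(3,4) lat by (simp add: eq_latency_same_acyclic_paths subgraph_st_walks)
  moreover have "eq_latency H r l = eq_latency (acyclic_part H) r l"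
    by (rule eq_latency_same_acyclic_paths[OF subgraph_st_walks[OF acyclic_part_subgraph_self]
          acyclic_paths_acyclic_part[symmetric] subgraph_latency_fn[OF H(2) lat]])
  moreover have "subgraph (acyclic_part H) G'"
    using subgraph_acyclic_paths[OF H(2)] assms(3,4) H(2)
    by (intro acyclic_part_subgraph) (auto simp: acyclic_paths_def subgraph_def)
  ultimately show "vulnerable G'"
    unfolding vulnerable_def
    using r gt subgraph_latency_fn[OF assms(3) lat] st_graph_acyclic_part[OF H(1)] by auto
next
  assume "vulnerable G'"
  then obtain r l' H where r: "r \<ge> 0" and lat': "latency_fn G' l'" and H: "st_graph H" "subgraph H G'"
    and gt: "eq_latency G' r l' > eq_latency H r l'" unfolding vulnerable_def by blast
  define l where "l e = (if e \<in> arcs G' then l' e else (\<lambda>_. 0))" for e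
  have lat: "latency_fn G l" using lat' by (auto simp: latency_fn_def l_def mono_on_def)
  have "eq_latency G r l = eq_latency G' r l'"
    using eq_latency_same_acyclic_paths[OF subgraph_st_walks[OF assms(3)] assms(4)[symmetric] lat]
      eq_latency_cong_arcs[of G' l l'] by (simp add: l_def)
  moreover have "eq_latency H r l = eq_latency H r l'"
    using H(2) by (intro eq_latency_cong_arcs) (auto simp: l_def subgraph_def)
  ultimately have "eq_latency H r l < eq_latency G r l" using gt by simp
  then show "vulnerable G"
    unfolding vulnerable_def using r lat H(1) subgraph_trans[OF H(2) assms(3)] by blast
qed

end
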